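(* Let $q\geq 3$ be an integer, let $\tau\geq 0$ be real, and let $\epsilon\in(0,1)$ be small. Set $$R=\min_{\substack{\gamma\in[0,q-1),\ \kappa\in[0,\frac{q-1}{q}),\\ \gamma+\kappa=\tau}}\left[1-(2\gamma-\kappa+1)H_q\!\left(\frac{\gamma}{2\gamma-\kappa+1}\right)+\gamma\log_q(q-1)-H_q(\kappa)\right]-\epsilon .$$ Then for all sufficiently large $n$, with probability at least $1-q^{-n}$, a random insdel code $\mathcal{C}\subseteq\Sigma_q^n$ of rate $R$ is $(\tau n,O(1/\epsilon))$-list-decodable.
   Context: $\Sigma_q$ is a finite alphabet of size $q$. The insdel distance $d(\mathbf a,\mathbf b)$ between words $\mathbf a\in\Sigma_q^{n_1}$, $\mathbf b\in\Sigma_q^{n_2}$ (lengths may differ) is the minimum number of single-symbol insertions and deletions needed to transform $\mathbf a$ into $\mathbf b$. For $\mathbf u\in\Sigma_q^n$ and real $z\ge 0$, the insdel ball is $\mathcal{B}(\mathbf u,z)=\{\mathbf v\in\bigcup_{i=\max\{n-z,0\}}^{n+z}\Sigma_q^i : d(\mathbf u,\mathbf v)\le z\}$. A code $\mathcal{C}\subseteq\Sigma_q^n$ is $(\tau n,L)$-list-decodable if for every nonnegative integer $m\in[\max(0,n-\tau n),n+\tau n]$ and every $\mathbf r\in\Sigma_q^m$, $|\mathcal{B}(\mathbf r,\tau n)\cap\mathcal{C}|\le L$. The rate of $\mathcal{C}$ is $\log_q|\mathcal{C}|/n$. A random insdel code of rate $R$ is a subset of $\Sigma_q^n$ of size $q^{Rn}$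 chosen uniformly at random. $H_q(x)=x\log_q(q-1)-x\log_q x-(1-x)\log_q(1-x)$ for $0<x<1$, with $H_q(0)=H_q(1)=0$. *)

theory Defs
  imports Complex_Main
begin

definition words :: "nat \<Rightarrow> nat \<Rightarrow> nat list set" where
  "words q n = {w. length w = n \<and> set w \<subseteq> {..<q}}"

definition insdel_step :: "nat list \<Rightarrow> nat list \<Rightarrow> bool" where
  "insdel_step a b \<longleftrightarrow>
     (\<exists>xs ys c. a = xs @ c # ys \<and> b = xs @ ys) \<or>
     (\<exists>xs ys c. b = xs @ c # ys \<and> a = xs @ ys)"

definition insdel_dist :: "nat list \<Rightarrow> nat list \<Rightarrow> nat" where
  "insdel_dist a b = (LEAST k. (insdel_step ^^ k) a b)"

definition insdel_ball :: "nat \<Rightarrow> nat list \<Rightarrow> real \<Rightarrow> nat list set" where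
  "insdel_ball q u z = {v. set v \<subseteq> {..<q} \<and>
      max (real (length u) - z) 0 \<le> real (length v) \<and>
      real (length v) \<le> real (length u) + z \<and>
      real (insdel_dist u v) \<le> z}"

definition list_decodable :: "nat \<Rightarrow> nat \<Rightarrow> real \<Rightarrow> real \<Rightarrow> nat list set \<Rightarrow> bool" where
  "list_decodable q n tau L C \<longleftrightarrow>
     (\<forall>m::nat. max 0 (real n - tau * n) \<le> real m \<and> real m \<le> real n + tau * n \<longrightarrow>
        (\<forall>r \<in> words q m. real (card (insdel_ball q r (tau * n) \<inter> C)) \<le> L))"

definition Hq :: "nat \<Rightarrow> real \<Rightarrow> real" where
  "Hq q x = (if 0 < x \<and> x < 1 then
     x * log q (q - 1) - x * log q x - (1 - x) * log q (1 - x) else 0)"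

text \<open>The rate bound before subtracting epsilon (the min is taken as infimum).\<close>
definition rate_fun :: "nat \<Rightarrow> real \<Rightarrow> real" where
  "rate_fun q tau = (INF p \<in> {(g, k). 0 \<le> g \<and> g < real q - 1 \<and> 0 \<le> k \<and> k < (real q - 1) / q \<and> g + k = tau}.
      (case p of (g, k) \<Rightarrow>
        1 - (2*g - k + 1) * Hq q (g / (2*g - k + 1)) + g * log q (q - 1) - Hq q k))"

text \<open>A uniformly random code of size M is list-decodable with
  probability good / (card (words q n) choose M).\<close>
definition good_codes :: "nat \<Rightarrow> nat \<Rightarrow> nat \<Rightarrow> real \<Rightarrow> real \<Rightarrow> nat list set set" where
  "good_codes q n M tau L = {C. C \<subseteq> words q n \<and> card C = M \<and> list_decodable q n tau L C}"

end

theory Submission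
  imports Defs "HOL-Library.Sublist"
begin

text \<open>
  A word \<open>v\<close> of length \<open>n\<close> within insdel distance \<open>\<tau>n\<close> of a received word \<open>r\<close> shares with
  \<open>r\<close> a common subsequence of length at least \<open>(|r| + n - \<tau>n)/2\<close>. Hence the ball around \<open>r\<close>
  is covered by the supersequences of the subsequences of \<open>r\<close> of that length. Bounding the
  number of subsequences by a binomial coefficient and the number of supersequences by an
  entropy estimate gives \<open>|B(r, \<tau>n) \<inter> \<Sigma>\<^sub>q\<^sup>n| \<le> q\<^bsup>n(1 - R\<^sub>0)\<^esup>\<close>, where \<open>R\<^sub>0\<close> is the minimum in the
  definition of the rate: the length of \<open>r\<close> determines the split \<open>\<tau> = \<gamma> + \<kappa>\<close> with
  \<open>\<gamma> = (|r| - n + \<tau>n)/2n\<close> and \<open>\<kappa> = (n - |r| + \<tau>n)/2n\<close> at which the objective is evaluated.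

  A code of size \<open>M \<le> q\<^bsup>(R\<^sub>0 - \<epsilon>)n\<^esup>\<close> is not list-decodable with list size \<open>L\<close> only if some
  received word has \<open>L' = \<lfloor>L\<rfloor> + 1\<close> codewords in its ball. A union bound over the at most
  \<open>q\<^bsup>(1 + \<tau>)n + 1\<^esup>\<close> received words and over the \<open>L'\<close>-subsets of their balls bounds the fraction
  of such codes by \<open>q\<^bsup>(1 + \<tau>)n + 1\<^esup> (q\<^bsup>-\<epsilon>n\<^esup>)\<^bsup>L'\<^esup>\<close>, which is at most \<open>q\<^bsup>-n\<^esup>\<close> as soon as
  \<open>\<epsilon>L' > 3 + \<tau>\<close>.
\<close>

section \<open>Insertion-deletion distance and common subsequences\<close>

lemma subseq_delete:
  assumes "subseq s (xs @ c # ys)"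
  obtains s' where "subseq s' s" "subseq s' (xs @ ys)" "length s \<le> Suc (length s')"
proof -
  obtain s1 s2 where s: "s = s1 @ s2" "subseq s1 xs" "subseq s2 (c # ys)"
    using assms by (auto elim: subseq_appendE)
  show thesis
  proof (cases s2)
    case Nil
    then show thesis using s by (intro that[of s]) (auto intro: list_emb_append_mono)
  next
    case (Cons d s2')
    have "subseq s2' ys" using s(3) Cons by (metis subseq_Cons' subseq_Cons2_iff)
    show thesis
    proof (rule that[of "s1 @ s2'"])
      show "subseq (s1 @ s2') s" unfolding s(1) Cons subseq_append' by (simp add: list_emb_Cons)
      show "subseq (s1 @ s2') (xs @ ys)" using s(2) \<open>subseq s2' ys\<close> by (rule list_emb_append_mono)
      show "length s \<le> Suc (length (s1 @ s2'))" using s(1) Cons by simp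
    qed
  qed
qed

lemma insdel_relpowp_common_subseq:
  "(insdel_step ^^ k) a b \<Longrightarrow>
     \<exists>s. subseq s a \<and> subseq s b \<and> length a + length b \<le> k + 2 * length s"
proof (induction k arbitrary: b)
  case 0
  then show ?case by auto
next
  case (Suc k)
  then obtain c where c: "(insdel_step ^^ k) a c" "insdel_step c b" by (auto elim: relpowp_Suc_E)
  from Suc.IH[OF c(1)] obtain s
    where s: "subseq s a" "subseq s c" "length a + length c \<le> k + 2 * length s" by blast
  from c(2) show ?case unfolding insdel_step_def
  proof (elim disjE exE conjE)
    fix xs ys d assume h: "c = xs @ d # ys" "b = xs @ ys"
    obtain s' where "subseq s' s" "subseq s' b" "length s \<le> Suc (length s')"
      using subseq_delete s(2) h by metis
    moreover have "length a + length b \<le> Suc k + 2 * length s'"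
      using s(3) h \<open>length s \<le> Suc (length s')\<close> by simp
    ultimately show ?thesis using s(1) by (blast intro: subseq_order.trans)
  next
    fix xs ys d assume h: "b = xs @ d # ys" "c = xs @ ys"
    have "subseq c b" unfolding h subseq_append' by (simp add: list_emb_Cons)
    then show ?thesis using s h by (auto intro: subseq_order.trans)
  qed
qed

lemma insdel_relpowp_delete_all: "(insdel_step ^^ length a) a []"
proof (induction a)
  case (Cons x a)
  have "insdel_step (x # a) a" unfolding insdel_step_def by (metis append_Nil)
  with Cons show ?case by (metis length_Cons relpowp_Suc_I2)
qed simp

lemma insdel_relpowp_insert_all: "(insdel_step ^^ length b) [] b"
proof (induction b)
  case (Cons x b)
  have "insdel_step b (x # b)" unfolding insdel_step_def by (metis append_Nil)
  with Cons show ?case by (metis length_Cons relpowp_Suc_I)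
qed simp

lemma insdel_dist_common_subseq:
  obtains s where "subseq s a" "subseq s b" "length a + length b \<le> insdel_dist a b + 2 * length s"
proof -
  have "(insdel_step ^^ (length a + length b)) a b"
    using insdel_relpowp_delete_all[of a] insdel_relpowp_insert_all[of b] by (auto simp: relpowp_add)
  then have "(insdel_step ^^ insdel_dist a b) a b" unfolding insdel_dist_def by (rule LeastI)
  then show thesis using insdel_relpowp_common_subseq that by blast
qed

section \<open>Counting subsequences and supersequences\<close>

definition supersequences :: "nat \<Rightarrow> nat \<Rightarrow> nat list \<Rightarrow> nat list set" where
  "supersequences q n s = {v \<in> words q n. subseq s v}"

lemma finite_words: "finite (words q n)"
  unfolding words_def using finite_lists_length_eq[of "{..<q}" n] by (simp add: conj_commute)

lemma card_words: "card (words q n) = q ^ n"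
  unfolding words_def using card_lists_length_eq[of "{..<q}" n] by (simp add: conj_commute)

lemma finite_supersequences: "finite (supersequences q n s)"
  unfolding supersequences_def using finite_words by simp

lemma card_subseqs_length_le: "card {s. subseq s r \<and> length s = k} \<le> length r choose k"
proof -
  let ?I = "{I. I \<subseteq> {..<length r} \<and> card I = k}"
  have "{s. subseq s r \<and> length s = k} \<subseteq> nths r ` ?I"
  proof
    fix s assume "s \<in> {s. subseq s r \<and> length s = k}"
    then obtain N where s: "s = nths r N" "length s = k" by (auto simp: subseq_conv_nths)
    define I where "I = {i \<in> N. i < length r}"
    have "nths r N = nths r I"
      unfolding nths_def I_def by (auto simp: set_zip intro!: arg_cong[where f = "map fst"] filter_cong)
    moreover have "card I = k" using s length_nths[of r N] unfolding I_def by (simp add: conj_commute)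
    ultimately show "s \<in> nths r ` ?I" using s(1) unfolding I_def by auto
  qed
  then have "card {s. subseq s r \<and> length s = k} \<le> card (nths r ` ?I)"
    by (intro card_mono) auto
  also have "\<dots> \<le> card ?I" by (rule card_image_le) auto
  also have "\<dots> = length r choose k" by (subst n_subsets) auto
  finally show ?thesis .
qed

lemma card_supersequences_Cons_le:
  "card (supersequences q (Suc n) (c # s))
     \<le> card (supersequences q n s) + (q - 1) * card (supersequences q n (c # s))"
proof (cases "c < q")
  case False
  have "c \<in> set v" if "subseq (c # s) v" for v using list_emb_set[OF that, of c] by auto
  then have "supersequences q (Suc n) (c # s) = {}"
    using False by (auto simp: supersequences_def words_def)
  then show ?thesis by simp
next
  case True
  let ?A = "supersequences q n s" and ?B = "supersequences q n (c # s)"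
  have "supersequences q (Suc n) (c # s) \<subseteq> (\<lambda>v. c # v) ` ?A \<union> (\<lambda>(x, v). x # v) ` (({..<q} - {c}) \<times> ?B)"
  proof
    fix v assume "v \<in> supersequences q (Suc n) (c # s)"
    then obtain x v' where v: "v = x # v'" "x < q" "v' \<in> words q n" "subseq (c # s) (x # v')"
      by (cases v) (auto simp: supersequences_def words_def)
    then show "v \<in> (\<lambda>v. c # v) ` ?A \<union> (\<lambda>(x, v). x # v) ` (({..<q} - {c}) \<times> ?B)"
      by (cases "x = c") (auto simp: supersequences_def)
  qed
  then have "card (supersequences q (Suc n) (c # s))
      \<le> card ((\<lambda>v. c # v) ` ?A \<union> (\<lambda>(x, v). x # v) ` (({..<q} - {c}) \<times> ?B))"
    by (intro card_mono) (auto simp: finite_supersequences)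
  also have "\<dots> \<le> card ?A + card (({..<q} - {c}) \<times> ?B)"
    by (intro card_Un_le[THEN order_trans] add_mono card_image_le) (auto simp: finite_supersequences)
  also have "\<dots> = card ?A + (q - 1) * card ?B" using True by (simp add: card_cartesian_product)
  finally show ?thesis .
qed

text \<open>
  With \<open>X = (q - 1)/p\<close>, this says that the bound \<open>X\<^bsup>n - |s|\<^esup> (1 - p)\<^bsup>-|s|\<^esup>\<close> below satisfies the
  recursion of card_supersequences_Cons_le with equality.
\<close>

lemma supersequence_bound_step:
  fixes p X m l :: real
  assumes p: "0 < p" "p < 1" and X: "0 < X"
  shows "X powr (m - l) * (1 - p) powr (- l) + p * X * (X powr (m - (l + 1)) * (1 - p) powr (- (l + 1)))
           = X powr (m - l) * (1 - p) powr (- (l + 1))"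
proof -
  define a where "a = X powr (m - (l + 1))"
  define b where "b = (1 - p) powr (- (l + 1))"
  have "(1 - p) powr (- l) = b * (1 - p)"
    unfolding b_def using p powr_add[of "1 - p" "- (l + 1)" 1] by simp
  moreover have "X powr (m - l) = a * X"
    unfolding a_def using X powr_add[of X "m - (l + 1)" 1] by simp
  ultimately show ?thesis
    unfolding a_def[symmetric] b_def[symmetric] by (simp only:) (simp add: algebra_simps)
qed

lemma card_supersequences_le:
  fixes p :: real
  assumes q: "q \<ge> 2" and p: "0 < p" "p \<le> (real q - 1) / real q"
  shows "real (card (supersequences q n s))
           \<le> ((real q - 1) / p) powr (real n - real (length s)) * (1 - p) powr (- real (length s))"
proof -
  define X where "X = (real q - 1) / p"
  have "(real q - 1) / real q < 1" using q by simp
  then have "p < 1" using p by linarith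
  have "X \<ge> real q" unfolding X_def using p q by (simp add: field_simps)
  show ?thesis unfolding X_def[symmetric]
  proof (induction n arbitrary: s)
    case 0
    show ?case
    proof (cases s)
      case Nil
      then show ?thesis using \<open>X \<ge> real q\<close> \<open>p < 1\<close> q by (simp add: card_words supersequences_def)
    next
      case (Cons c s')
      then have "supersequences q 0 s = {}" by (auto simp: supersequences_def words_def)
      then show ?thesis by simp
    qed
  next
    case (Suc n)
    show ?case
    proof (cases s)
      case Nil
      have "real (card (supersequences q (Suc n) s)) = real q ^ Suc n"
        using Nil by (simp add: card_words supersequences_def)
      also have "\<dots> \<le> X ^ Suc n" using \<open>X \<ge> real q\<close> by (intro power_mono) auto
      also have "\<dots> = X powr real (Suc n)" using \<open>X \<ge> real q\<close> q by (intro powr_realpow[symmetric]) auto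
      finally show ?thesis using Nil \<open>p < 1\<close> by simp
    next
      case (Cons c s')
      define l where "l = real (length s')"
      have "real (q - 1) = p * X" unfolding X_def using p q by simp
      moreover have "real (card (supersequences q (Suc n) s))
          \<le> real (card (supersequences q n s') + (q - 1) * card (supersequences q n (c # s')))"
        unfolding of_nat_le_iff Cons by (rule card_supersequences_Cons_le)
      ultimately have "real (card (supersequences q (Suc n) s))
          \<le> real (card (supersequences q n s')) + p * X * real (card (supersequences q n (c # s')))"
        by simp
      also have "\<dots> \<le> X powr (real n - l) * (1 - p) powr (- l)
                      + p * X * (X powr (real n - (l + 1)) * (1 - p) powr (- (l + 1)))"
        using Suc.IH[of s'] Suc.IH[of "c # s'"] p \<open>X \<ge> real q\<close>
        by (intro add_mono mult_left_mono) (auto simp: l_def add.commute)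
      also have "\<dots> = X powr (real n - l) * (1 - p) powr (- (l + 1))"
        using \<open>p < 1\<close> \<open>X \<ge> real q\<close> p q by (intro supersequence_bound_step) auto
      also have "\<dots> = X powr (real (Suc n) - real (length s)) * (1 - p) powr (- real (length s))"
        unfolding l_def Cons by (simp add: algebra_simps)
      finally show ?thesis .
    qed
  qed
qed

section \<open>Entropy estimates\<close>

lemma Hq_scaled_eq:
  assumes "0 < g" "g < N"
  shows "N * Hq q (g / N) - g * log q (real (q - 1)) = - g * log q (g / N) - (N - g) * log q (1 - g / N)"
proof -
  have "0 < g / N" "g / N < 1" "N \<noteq> 0" using assms by auto
  moreover have "N * (g / N) = g" "N * (1 - g / N) = N - g" using assms by (auto simp: field_simps)
  ultimately show ?thesis unfolding Hq_def by (simp add: algebra_simps)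
qed

lemma Hq_le:
  assumes q: "q \<ge> 2"
  shows "Hq q x \<le> log q (real (q - 1)) + 2 / ln q"
proof -
  have lq: "ln (real q) > 0" and l0: "log q (real (q - 1)) \<ge> 0" using q by auto
  have neg_entropy_le: "- (y * log q y) \<le> 1 / ln q" if "0 < y" for y :: real
  proof -
    have "- ln y \<le> 1 / y - 1" using ln_le_minus_one[of "1 / y"] that by (simp add: ln_div)
    then have "- (y * ln y) \<le> 1" using that by (simp add: field_simps)
    then have "- (y * ln y) / ln q \<le> 1 / ln q" using lq by (intro divide_right_mono) auto
    then show ?thesis by (simp add: log_def)
  qed
  show ?thesis
  proof (cases "0 < x \<and> x < 1")
    case True
    have "x * log q (real (q - 1)) \<le> log q (real (q - 1))" using True l0 by (intro mult_left_le_one_le) auto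
    then show ?thesis using True neg_entropy_le[of x] neg_entropy_le[of "1 - x"] by (simp add: Hq_def)
  qed (use l0 lq in \<open>auto simp: Hq_def\<close>)
qed

lemma Hq_scaled_ge:
  assumes q: "q \<ge> 2" and g: "0 \<le> g" "g < N"
  shows "g * log q (real (q - 1)) \<le> N * Hq q (g / N)"
proof (cases "g = 0")
  case False
  then have P: "0 < g / N" "g / N < 1" using g by auto
  then have "log q (g / N) < 0" "log q (1 - g / N) < 0" using q by auto
  then have "g * log q (g / N) \<le> 0" "(N - g) * log q (1 - g / N) \<le> 0"
    using g by (auto intro: mult_nonneg_nonpos)
  then have "0 \<le> - g * log q (g / N) - (N - g) * log q (1 - g / N)" by simp
  also have "\<dots> = N * Hq q (g / N) - g * log q (real (q - 1))"
    using False g by (subst Hq_scaled_eq) auto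
  finally show ?thesis by simp
qed (simp add: Hq_def)

lemma Hq_tendsto_one:
  assumes q: "q \<ge> 2"
  shows "(Hq q \<longlongrightarrow> 1) (at_left ((real q - 1) / q))"
proof -
  define x0 where "x0 = (real q - 1) / q"
  have x0: "0 < x0" "x0 < 1" unfolding x0_def using q by auto
  define h where "h x = x * log q (real (q - 1)) - x * log q x - (1 - x) * log q (1 - x)" for x
  have "h x0 = 1"
  proof -
    have a: "log q x0 = log q (real (q - 1)) - 1" and b: "1 - x0 = 1 / q" and c: "log q (1 / q) = - 1"
      unfolding x0_def using q by (auto simp: log_divide of_nat_diff field_simps)
    have "h x0 = x0 * log q (real (q - 1)) - x0 * (log q (real (q - 1)) - 1) - 1 / q * (- 1)"
      unfolding h_def a b c ..
    then have "h x0 = x0 + 1 / q" by (simp add: algebra_simps)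
    then show ?thesis unfolding x0_def using q by (simp add: field_simps)
  qed
  moreover have "(h \<longlongrightarrow> h x0) (at_left x0)"
    unfolding h_def using x0 q by (intro tendsto_intros) auto
  moreover have "eventually (\<lambda>x. Hq q x = h x) (at_left x0)"
    using eventually_at_left_real[OF x0(1)] by eventually_elim (use x0 in \<open>auto simp: Hq_def h_def\<close>)
  ultimately show ?thesis unfolding x0_def[symmetric] by (simp add: tendsto_cong)
qed

lemma binomial_mult_power_le_one:
  fixes p :: real
  assumes "0 \<le> p" "p \<le> 1" "k \<le> m"
  shows "real (m choose k) * p ^ (m - k) * (1 - p) ^ k \<le> 1"
proof -
  have "real (m choose k) * p ^ (m - k) * (1 - p) ^ k
      = real (m choose (m - k)) * p ^ (m - k) * (1 - p) ^ (m - (m - k))"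
    using assms by (simp add: binomial_symmetric[symmetric])
  also have "\<dots> \<le> (\<Sum>i\<le>m. real (m choose i) * p ^ i * (1 - p) ^ (m - i))"
    by (rule member_le_sum) (use assms in auto)
  also have "\<dots> = (p + (1 - p)) ^ m" by (rule binomial_ring[symmetric])
  finally show ?thesis by simp
qed

lemma binomial_le_powr_Hq:
  fixes g N :: real
  assumes q: "q \<ge> 2" and g: "0 \<le> g" "g < N" and km: "k \<le> m"
    and m: "real m = real n * (N - g)" and mk: "real m - real k \<le> g * real n"
  shows "real (m choose k) \<le> real q powr (real n * (N * Hq q (g / N) - g * log q (real (q - 1))))"
proof (cases "g = 0")
  case True
  then have "k = m" using mk km by simp
  then show ?thesis using True q by (simp add: Hq_def)
next
  case False
  define P where "P = g / N"
  have P: "0 < P" "P < 1" unfolding P_def using g False by auto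
  have q1: "real q > 1" using q by simp
  have C: "real (m choose k) > 0" using km by simp
  have "log q (real (m choose k) * P ^ (m - k) * (1 - P) ^ k) \<le> 0"
    using binomial_mult_power_le_one[of P k m] P C q1 km by (subst log_le_zero_cancel_iff) auto
  then have "log q (real (m choose k)) \<le> - (real (m - k) * log q P) - real k * log q (1 - P)"
    using C P q1 by (simp add: log_mult log_nat_power)
  also have "\<dots> \<le> - (g * real n * log q P) - real m * log q (1 - P)"
  proof -
    have "log q P < 0" "log q (1 - P) < 0" using P q1 by auto
    then show ?thesis using mk km
      by (intro diff_mono) (auto simp: of_nat_diff intro: mult_right_mono_neg)
  qed
  also have "\<dots> = real n * (- g * log q P - (N - g) * log q (1 - P))"
    by (simp add: m algebra_simps)
  also have "\<dots> = real n * (N * Hq q P - g * log q (real (q - 1)))"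
    unfolding P_def using False g by (subst Hq_scaled_eq) auto
  finally show ?thesis using C q1 unfolding P_def by (subst le_powr_iff) auto
qed

lemma supersequences_subset_singleton:
  assumes "n \<le> length s"
  shows "supersequences q n s \<subseteq> {s}"
proof
  fix v assume "v \<in> supersequences q n s"
  then have v: "length v = n" "subseq s v" by (auto simp: supersequences_def words_def)
  then have "length s = length v" using assms list_emb_length[OF v(2)] by simp
  then show "v \<in> {s}" using v subseq_same_length by blast
qed

lemma card_supersequences_le_Hq:
  assumes q: "q \<ge> 2" and \<kappa>: "0 \<le> \<kappa>" "\<kappa> \<le> (real q - 1) / real q"
    and s: "real n - real (length s) \<le> \<kappa> * real n"
  shows "real (card (supersequences q n s)) \<le> real q powr (real n * Hq q \<kappa>)"
proof (cases "\<kappa> = 0")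
  case True
  then have "supersequences q n s \<subseteq> {s}" using s by (intro supersequences_subset_singleton) simp
  then have "card (supersequences q n s) \<le> card {s}" by (rule card_mono[rotated]) simp
  then show ?thesis using True q by (simp add: Hq_def)
next
  case False
  define l where "l = real (length s)"
  have "(real q - 1) / real q < 1" using q by simp
  then have \<kappa>01: "0 < \<kappa>" "\<kappa> < 1" using False \<kappa> by auto
  have q1: "real q > 1" "real (q - 1) = real q - 1" using q by auto
  show ?thesis
  proof (cases "card (supersequences q n s) = 0")
    case False
    have "log q (real (card (supersequences q n s)))
        \<le> log q (((real q - 1) / \<kappa>) powr (real n - l) * (1 - \<kappa>) powr (- l))"
      using False card_supersequences_le[OF q \<kappa>01(1) \<kappa>(2)] \<kappa>01 q1
      unfolding l_def by (subst log_le_cancel_iff) auto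
    also have "\<dots> = (real n - l) * (log q ((real q - 1) / \<kappa>) + log q (1 - \<kappa>)) - real n * log q (1 - \<kappa>)"
      using \<kappa>01 q1 by (simp add: log_mult log_powr algebra_simps)
    also have "\<dots> \<le> \<kappa> * real n * (log q ((real q - 1) / \<kappa>) + log q (1 - \<kappa>)) - real n * log q (1 - \<kappa>)"
    proof -
      have "(real q - 1) / \<kappa> * (1 - \<kappa>) \<ge> 1" using \<kappa> \<kappa>01 q by (simp add: field_simps)
      moreover have "log q ((real q - 1) / \<kappa>) + log q (1 - \<kappa>) = log q ((real q - 1) / \<kappa> * (1 - \<kappa>))"
        using \<kappa>01 q1 by (intro log_mult_pos[symmetric]) auto
      ultimately have "log q ((real q - 1) / \<kappa>) + log q (1 - \<kappa>) \<ge> 0"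
        using q1 by simp
      then show ?thesis using s unfolding l_def by (simp add: mult_right_mono)
    qed
    also have "\<dots> = real n * Hq q \<kappa>"
      unfolding Hq_def using \<kappa>01 q1 by (simp add: log_divide algebra_simps)
    finally show ?thesis using False q1 by (subst le_powr_iff) auto
  qed simp
qed

section \<open>The rate function and the size of insdel balls\<close>

lemma insdel_ball_subset_supersequences:
  "insdel_ball q r z \<inter> words q n
     \<subseteq> (\<Union>s \<in> {s. subseq s r \<and> length s = nat \<lceil>(real (length r) + real n - z) / 2\<rceil>}.
           supersequences q n s)"
  (is "_ \<subseteq> (\<Union>s \<in> {s. subseq s r \<and> length s = ?k}. _)")
proof
  fix v assume v: "v \<in> insdel_ball q r z \<inter> words q n"
  then have "length v = n" "real (insdel_dist r v) \<le> z"
    by (auto simp: words_def insdel_ball_def)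
  obtain s where s: "subseq s r" "subseq s v" "length r + length v \<le> insdel_dist r v + 2 * length s"
    using insdel_dist_common_subseq by blast
  have "real (length r + length v) \<le> real (insdel_dist r v + 2 * length s)"
    using s(3) by (rule of_nat_mono)
  then have "(real (length r) + real n - z) / 2 \<le> real (length s)"
    using \<open>length v = n\<close> \<open>real (insdel_dist r v) \<le> z\<close> by simp
  then have "?k \<le> length s" by (simp add: nat_le_iff ceiling_le_iff)
  have "subseq (take ?k s) s" by (rule prefix_imp_subseq) (rule take_is_prefix)
  then have "subseq (take ?k s) r" "subseq (take ?k s) v"
    using s by (auto intro: subseq_order.trans)
  moreover have "length (take ?k s) = ?k" using \<open>?k \<le> length s\<close> by simp
  ultimately show "v \<in> (\<Union>s \<in> {s. subseq s r \<and> length s = ?k}. supersequences q n s)"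
    using v by (auto simp: supersequences_def)
qed

lemma card_insdel_ball_le_binomial:
  fixes r :: "nat list" and n :: nat and z B :: real
  defines "l \<equiv> nat \<lceil>(real (length r) + real n - z) / 2\<rceil>"
  assumes B: "\<And>s. length s = l \<Longrightarrow> real (card (supersequences q n s)) \<le> B"
  shows "real (card (insdel_ball q r z \<inter> words q n)) \<le> real (length r choose l) * B"
proof -
  define Sub where "Sub = {s. subseq s r \<and> length s = l}"
  have "finite Sub" by (rule finite_subset[of _ "set (subseqs r)"]) (auto simp: Sub_def)
  have "0 \<le> B" using B[of "replicate l 0"] by (meson of_nat_0_le_iff order_trans length_replicate)
  have "card (insdel_ball q r z \<inter> words q n) \<le> card (\<Union>s\<in>Sub. supersequences q n s)"
    using insdel_ball_subset_supersequences[of q r z n] \<open>finite Sub\<close>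
    by (intro card_mono) (auto simp: finite_supersequences Sub_def l_def)
  also have "\<dots> \<le> (\<Sum>s\<in>Sub. card (supersequences q n s))"
    by (rule card_UN_le[OF \<open>finite Sub\<close>])
  finally have "real (card (insdel_ball q r z \<inter> words q n)) \<le> (\<Sum>s\<in>Sub. real (card (supersequences q n s)))"
    by (simp flip: of_nat_sum)
  also have "\<dots> \<le> real (card Sub) * B"
    using sum_mono[of Sub _ "\<lambda>_. B"] B by (simp add: Sub_def)
  also have "\<dots> \<le> real (length r choose l) * B"
    using card_subseqs_length_le[of r l] \<open>0 \<le> B\<close> by (intro mult_right_mono) (auto simp: Sub_def)
  finally show ?thesis .
qed

definition rate_domain :: "nat \<Rightarrow> real \<Rightarrow> (real \<times> real) set" where
  "rate_domain q tau =
     {(g, k). 0 \<le> g \<and> g < real q - 1 \<and> 0 \<le> k \<and> k < (real q - 1) / q \<and> g + k = tau}"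

definition rate_objective :: "nat \<Rightarrow> real \<Rightarrow> real \<Rightarrow> real" where
  "rate_objective q g k =
     1 - (2*g - k + 1) * Hq q (g / (2*g - k + 1)) + g * log q (real (q - 1)) - Hq q k"

lemma rate_fun_eq_INF:
  "rate_fun q tau = (INF (g, k) \<in> rate_domain q tau. rate_objective q g k)"
  unfolding rate_fun_def rate_domain_def rate_objective_def ..

lemma card_insdel_ball_le_rate_objective:
  assumes q: "q \<ge> 2" and n: "n > 0" and g: "0 \<le> g" and k: "0 \<le> k" "k \<le> (real q - 1) / q"
    and r: "real (length r) = real n * (1 + g - k)"
  shows "real (card (insdel_ball q r ((g + k) * n) \<inter> words q n))
           \<le> real q powr (real n * (1 - rate_objective q g k))"
proof -
  define m where "m = length r"
  define l where "l = nat \<lceil>(real m + real n - (g + k) * n) / 2\<rceil>"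
  define \<sigma> where "\<sigma> = (2*g - k + 1) * Hq q (g / (2*g - k + 1)) - g * log q (real (q - 1))"
  have "(real m + real n - (g + k) * n) / 2 = real n * (1 - k)"
    unfolding m_def r by (simp add: field_simps)
  then have l: "real l \<ge> real n * (1 - k)" unfolding l_def by linarith
  have "(real q - 1) / real q < 1" using q by simp
  then have "k < 1" using k by linarith
  have "real (m choose l) \<le> real q powr (real n * \<sigma>)"
  proof (cases "l \<le> m")
    case True
    then show ?thesis unfolding \<sigma>_def
      by (intro binomial_le_powr_Hq) (use q g \<open>k < 1\<close> r l in \<open>auto simp: m_def algebra_simps\<close>)
  qed (simp add: binomial_eq_0)
  have "real (card (insdel_ball q r ((g + k) * n) \<inter> words q n))
      \<le> real (m choose l) * real q powr (real n * Hq q k)"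
    unfolding m_def l_def using q k l
    by (intro card_insdel_ball_le_binomial card_supersequences_le_Hq) (auto simp: m_def l_def algebra_simps)
  also have "\<dots> \<le> real q powr (real n * \<sigma>) * real q powr (real n * Hq q k)"
    by (intro mult_right_mono) (fact, simp)
  also have "\<dots> = real q powr (real n * (1 - rate_objective q g k))"
    unfolding rate_objective_def \<sigma>_def by (simp add: powr_add[symmetric] algebra_simps)
  finally show ?thesis .
qed

lemma bdd_below_rate_objective:
  assumes q: "q \<ge> 2"
  shows "bdd_below ((\<lambda>(g, k). rate_objective q g k) ` rate_domain q tau)"
proof -
  define B where "B = log q (real (q - 1)) + 2 / ln q"
  have B: "B \<ge> 0" unfolding B_def using q by simp
  have "rate_objective q g k \<ge> 1 - 2 * real q * B - B" if "(g, k) \<in> rate_domain q tau" for g k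
  proof -
    have "(real q - 1) / real q < 1" using q by simp
    moreover have "0 \<le> g" "g < real q - 1" "0 \<le> k" "k < (real q - 1) / real q"
      using that unfolding rate_domain_def by auto
    ultimately have gk: "0 \<le> g" "g < real q - 1" "0 \<le> k" "k < 1" by linarith+
    define N where "N = 2*g - k + 1"
    have N: "0 \<le> N" "N \<le> 2 * real q" unfolding N_def using gk by auto
    have "N * Hq q (g / N) \<le> N * B" unfolding B_def using Hq_le[OF q] N by (intro mult_left_mono) auto
    also have "\<dots> \<le> 2 * real q * B" using N B by (intro mult_right_mono) auto
    finally have "N * Hq q (g / N) \<le> 2 * real q * B" .
    moreover have "Hq q k \<le> B" unfolding B_def by (rule Hq_le[OF q])
    moreover have "g * log q (real (q - 1)) \<ge> 0" using gk q by simp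
    ultimately show ?thesis unfolding rate_objective_def N_def[symmetric] by linarith
  qed
  then show ?thesis unfolding bdd_below_def by fastforce
qed

lemma rate_fun_le_rate_objective:
  assumes "q \<ge> 2" "(g, k) \<in> rate_domain q tau"
  shows "rate_fun q tau \<le> rate_objective q g k"
  unfolding rate_fun_eq_INF using cINF_lower[OF bdd_below_rate_objective[OF assms(1)] assms(2)] by simp

lemma rate_objective_le:
  assumes q: "q \<ge> 2" and gk: "(g, k) \<in> rate_domain q tau"
  shows "rate_objective q g k \<le> 1 - Hq q k"
proof -
  have "(real q - 1) / real q < 1" using q by simp
  moreover have "0 \<le> g" "k < (real q - 1) / real q" using gk unfolding rate_domain_def by auto
  ultimately have "0 \<le> g" "g < 2*g - k + 1" by linarith+
  then have "g * log q (real (q - 1)) \<le> (2*g - k + 1) * Hq q (g / (2*g - k + 1))"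
    by (rule Hq_scaled_ge[OF q])
  then show ?thesis unfolding rate_objective_def by linarith
qed

text \<open>
  For \<open>\<tau> \<ge> (q - 1)/q\<close> the domain contains points with \<open>\<kappa>\<close> arbitrarily close to \<open>(q - 1)/q\<close>,
  where \<open>H\<^sub>q\<close> tends to its maximum 1, and the objective is at most \<open>1 - H\<^sub>q(\<kappa>)\<close>.
\<close>

lemma rate_fun_nonpos:
  assumes q: "q \<ge> 2" and tau: "tau \<ge> (real q - 1) / q" and ne: "rate_domain q tau \<noteq> {}"
  shows "rate_fun q tau \<le> 0"
proof (rule field_le_epsilon)
  fix d :: real assume "0 < d"
  define x0 where "x0 = (real q - 1) / q"
  obtain g k where "(g, k) \<in> rate_domain q tau" using ne by auto
  then have "max 0 (tau - (real q - 1)) < x0" using q unfolding rate_domain_def x0_def by auto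
  then have "eventually (\<lambda>x. max 0 (tau - (real q - 1)) < x \<and> x < x0) (at_left x0)"
    by (rule eventually_mono[OF eventually_at_left_real]) auto
  moreover have "eventually (\<lambda>x. Hq q x > 1 - d) (at_left x0)"
    using Hq_tendsto_one[OF q] \<open>0 < d\<close> unfolding x0_def by (intro order_tendstoD(1)) auto
  ultimately obtain x where x: "max 0 (tau - (real q - 1)) < x" "x < x0" "Hq q x > 1 - d"
    using eventually_happens[OF eventually_conj] by fastforce
  then have "(tau - x, x) \<in> rate_domain q tau"
    using tau unfolding rate_domain_def x0_def by auto
  then have "rate_fun q tau \<le> 1 - Hq q x"
    using rate_fun_le_rate_objective rate_objective_le q by (meson order_trans)
  then show "rate_fun q tau \<le> 0 + d" using x by simp
qed

lemma card_insdel_ball_le: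
  assumes q: "q \<ge> 2" and tau: "0 \<le> tau" "tau < (real q - 1) / q" and n: "n > 0"
    and r: "r \<in> words q m"
    and m: "max 0 (real n - tau * n) \<le> real m" "real m \<le> real n + tau * n"
  shows "real (card (insdel_ball q r (tau * n) \<inter> words q n)) \<le> real q powr (real n * (1 - rate_fun q tau))"
proof -
  define g where "g = (real m - real n + tau * n) / (2 * n)"
  define k where "k = (real n - real m + tau * n) / (2 * n)"
  have gk: "0 \<le> g" "0 \<le> k" "g + k = tau" "real m = real n * (1 + g - k)"
    using n m unfolding g_def k_def by (auto simp: field_simps)
  have "(real q - 1) / real q < 1" "real q \<ge> 2" using q by auto
  then have "g < real q - 1" using gk tau by linarith
  then have "(g, k) \<in> rate_domain q tau" using gk tau unfolding rate_domain_def by auto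
  have "k \<le> (real q - 1) / q" "length r = m" using gk tau r by (auto simp: words_def)
  then have "real (card (insdel_ball q r ((g + k) * n) \<inter> words q n))
      \<le> real q powr (real n * (1 - rate_objective q g k))"
    using q n gk by (intro card_insdel_ball_le_rate_objective) auto
  then have "real (card (insdel_ball q r (tau * n) \<inter> words q n))
      \<le> real q powr (real n * (1 - rate_objective q g k))"
    unfolding \<open>g + k = tau\<close> .
  also have "\<dots> \<le> real q powr (real n * (1 - rate_fun q tau))"
    using rate_fun_le_rate_objective[OF q \<open>(g, k) \<in> rate_domain q tau\<close>] q n by auto
  finally show ?thesis .
qed

section \<open>Counting codes\<close>

lemma binomial_mult_power_le:
  fixes M N l :: nat
  assumes "M \<le> N"
  shows "real (M choose l) * real N ^ l \<le> real M ^ l * real (N choose l)"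
proof (cases "l \<le> M")
  case True
  have "real (M choose l) * real N ^ l = (\<Prod>i = 0..<l. real (M - i) / real (l - i)) * (\<Prod>i = 0..<l. real N)"
    using True by (simp add: binomial_altdef_of_nat)
  also have "\<dots> = (\<Prod>i = 0..<l. real (M - i) / real (l - i) * real N)"
    by (rule prod.distrib[symmetric])
  also have "\<dots> \<le> (\<Prod>i = 0..<l. real M * (real (N - i) / real (l - i)))"
  proof (rule prod_mono)
    fix i assume "i \<in> {0..<l}"
    then have "i \<le> M" "i \<le> N" using True assms by auto
    then have "real (M - i) * real N \<le> real M * real (N - i)"
      using assms by (simp add: of_nat_diff algebra_simps mult_right_mono)
    then show "0 \<le> real (M - i) / real (l - i) * real N
               \<and> real (M - i) / real (l - i) * real N \<le> real M * (real (N - i) / real (l - i))"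
      by (simp add: divide_right_mono mult.commute times_divide_eq_left)
  qed
  also have "\<dots> = (\<Prod>i = 0..<l. real M) * (\<Prod>i = 0..<l. real (N - i) / real (l - i))"
    by (rule prod.distrib)
  also have "\<dots> = real M ^ l * real (N choose l)"
    using True assms by (simp add: binomial_altdef_of_nat)
  finally show ?thesis .
qed (simp add: binomial_eq_0)

lemma binomial_diff_le:
  fixes L M N :: nat
  assumes "L \<le> M" "M \<le> N"
  shows "real ((N - L) choose (M - L)) \<le> (real M / real N) ^ L * real (N choose M)"
proof (cases "N = 0")
  case False
  have "real ((N - L) choose (M - L)) * real (N choose L) = real (N choose M) * real (M choose L)"
    using choose_mult[OF assms] by (metis of_nat_mult mult.commute)
  also have "\<dots> \<le> real (N choose M) * ((real M / real N) ^ L * real (N choose L))"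
    using binomial_mult_power_le[OF assms(2), of L] False
    by (intro mult_left_mono) (simp_all add: power_divide field_simps)
  finally show ?thesis using assms by (simp add: mult.assoc[symmetric] mult.commute[of _ "real (N choose M)"])
qed (use assms in simp)

lemma card_subsets_containing:
  assumes W: "finite W" and S: "S \<subseteq> W" "card S \<le> M"
  shows "card {C. C \<subseteq> W \<and> card C = M \<and> S \<subseteq> C} = (card W - card S) choose (M - card S)"
proof -
  have fS: "finite S" using W S finite_subset by blast
  have "bij_betw (\<lambda>D. D \<union> S) {D. D \<subseteq> W - S \<and> card D = M - card S} {C. C \<subseteq> W \<and> card C = M \<and> S \<subseteq> C}"
  proof (rule bij_betw_byWitness[where f' = "\<lambda>C. C - S"])
    show "(\<lambda>D. D \<union> S) ` {D. D \<subseteq> W - S \<and> card D = M - card S} \<subseteq> {C. C \<subseteq> W \<and> card C = M \<and> S \<subseteq> C}"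
    proof
      fix C assume "C \<in> (\<lambda>D. D \<union> S) ` {D. D \<subseteq> W - S \<and> card D = M - card S}"
      then obtain D where D: "D \<subseteq> W - S" "card D = M - card S" "C = D \<union> S" by auto
      then have "card (D \<union> S) = card D + card S"
        using W fS by (intro card_Un_disjoint) (auto intro: finite_subset)
      then show "C \<in> {C. C \<subseteq> W \<and> card C = M \<and> S \<subseteq> C}" using D S by auto
    qed
    show "(\<lambda>C. C - S) ` {C. C \<subseteq> W \<and> card C = M \<and> S \<subseteq> C} \<subseteq> {D. D \<subseteq> W - S \<and> card D = M - card S}"
      using fS by (auto simp: card_Diff_subset)
  qed auto
  then have "card {C. C \<subseteq> W \<and> card C = M \<and> S \<subseteq> C} = card {D. D \<subseteq> W - S \<and> card D = M - card S}"
    by (simp add: bij_betw_same_card)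
  also have "\<dots> = (card W - card S) choose (M - card S)"
    using W S fS by (subst n_subsets) (auto simp: card_Diff_subset)
  finally show ?thesis .
qed

lemma subsets_with_large_intersection_subset:
  "{C. C \<subseteq> W \<and> card C = M \<and> (\<exists>i\<in>I. L \<le> card (B i \<inter> C))}
     \<subseteq> (\<Union>i\<in>I. \<Union>S\<in>{S. S \<subseteq> B i \<inter> W \<and> card S = L}. {C. C \<subseteq> W \<and> card C = M \<and> S \<subseteq> C})"
proof
  fix C assume "C \<in> {C. C \<subseteq> W \<and> card C = M \<and> (\<exists>i\<in>I. L \<le> card (B i \<inter> C))}"
  then obtain i where C: "C \<subseteq> W" "card C = M" "i \<in> I" "L \<le> card (B i \<inter> C)" by blast
  then obtain S where S: "S \<subseteq> B i \<inter> C" "card S = L" by (meson obtain_subset_with_card_n)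
  then have "S \<in> {S. S \<subseteq> B i \<inter> W \<and> card S = L}" using C by blast
  moreover have "C \<in> {C. C \<subseteq> W \<and> card C = M \<and> S \<subseteq> C}" using C S by blast
  ultimately show "C \<in> (\<Union>i\<in>I. \<Union>S\<in>{S. S \<subseteq> B i \<inter> W \<and> card S = L}. {C. C \<subseteq> W \<and> card C = M \<and> S \<subseteq> C})"
    using C(3) by blast
qed

lemma card_subsets_with_large_intersection_le:
  fixes W :: "'a set" and B :: "'i \<Rightarrow> 'a set"
  assumes W: "finite W" and I: "finite I" and LM: "L \<le> M" "M \<le> card W"
    and B: "\<And>i. i \<in> I \<Longrightarrow> real (card (B i \<inter> W)) \<le> b"
  shows "real (card {C. C \<subseteq> W \<and> card C = M \<and> (\<exists>i\<in>I. L \<le> card (B i \<inter> C))})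
           \<le> real (card I) * (b * real M / real (card W)) ^ L * real (card W choose M)"
proof -
  define Subs where "Subs i = {S. S \<subseteq> B i \<inter> W \<and> card S = L}" for i
  define T where "T S = {C. C \<subseteq> W \<and> card C = M \<and> S \<subseteq> C}" for S
  have fSubs: "finite (Subs i)" for i
    using W by (rule finite_subset[rotated, OF finite_Pow_iff[THEN iffD2]]) (auto simp: Subs_def)
  have fT: "finite (T S)" for S
    using W by (rule finite_subset[rotated, OF finite_Pow_iff[THEN iffD2]]) (auto simp: T_def)
  have "card {C. C \<subseteq> W \<and> card C = M \<and> (\<exists>i\<in>I. L \<le> card (B i \<inter> C))} \<le> card (\<Union>i\<in>I. \<Union>S\<in>Subs i. T S)"
    using subsets_with_large_intersection_subset[of W M I L B] I fSubs fT
    unfolding Subs_def[symmetric] T_def[symmetric] by (intro card_mono) auto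
  also have "\<dots> \<le> (\<Sum>i\<in>I. \<Sum>S\<in>Subs i. card (T S))"
    by (intro card_UN_le[THEN order_trans] sum_mono card_UN_le I fSubs)
  also have "\<dots> = (\<Sum>i\<in>I. card (Subs i) * ((card W - L) choose (M - L)))"
    using W LM by (intro sum.cong refl) (auto simp: T_def Subs_def card_subsets_containing)
  finally have "real (card {C. C \<subseteq> W \<and> card C = M \<and> (\<exists>i\<in>I. L \<le> card (B i \<inter> C))})
      \<le> (\<Sum>i\<in>I. real (card (Subs i)) * real ((card W - L) choose (M - L)))"
    by (simp flip: of_nat_mult of_nat_sum)
  also have "\<dots> \<le> (\<Sum>i\<in>I. b ^ L * ((real M / real (card W)) ^ L * real (card W choose M)))"
  proof (intro sum_mono mult_mono)
    fix i assume "i \<in> I"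
    then show "0 \<le> b ^ L" using B[of i] by (meson of_nat_0_le_iff order_trans zero_le_power)
    have "card (Subs i) = card (B i \<inter> W) choose L"
      unfolding Subs_def using W by (intro n_subsets) simp
    also have "\<dots> \<le> card (B i \<inter> W) ^ L"
      by (cases "L \<le> card (B i \<inter> W)") (auto simp: binomial_le_pow binomial_eq_0)
    finally have "real (card (Subs i)) \<le> real (card (B i \<inter> W)) ^ L"
      by (metis of_nat_le_iff of_nat_power)
    also have "\<dots> \<le> b ^ L" using B[OF \<open>i \<in> I\<close>] by (intro power_mono) auto
    finally show "real (card (Subs i)) \<le> b ^ L" .
  qed (use LM binomial_diff_le in auto)
  also have "\<dots> = real (card I) * (b * real M / real (card W)) ^ L * real (card W choose M)"
    by (simp add: power_mult_distrib power_divide)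
  finally show ?thesis .
qed

definition received_words :: "nat \<Rightarrow> nat \<Rightarrow> real \<Rightarrow> nat list set" where
  "received_words q n tau =
     (\<Union>m \<in> {m. max 0 (real n - tau * n) \<le> real m \<and> real m \<le> real n + tau * n}. words q m)"

lemma list_decodable_iff:
  "list_decodable q n tau L C
     \<longleftrightarrow> (\<forall>r \<in> received_words q n tau. real (card (insdel_ball q r (tau * n) \<inter> C)) \<le> L)"
  unfolding list_decodable_def received_words_def by auto

lemma sum_power_le_power_Suc:
  fixes q :: real
  assumes "q \<ge> 2"
  shows "(\<Sum>m\<le>K. q ^ m) \<le> q ^ Suc K"
proof (induction K)
  case (Suc K)
  have "(\<Sum>m\<le>Suc K. q ^ m) \<le> 2 * q ^ Suc K" using Suc by simp
  also have "\<dots> \<le> q ^ Suc (Suc K)" using assms by (simp add: mult_right_mono)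
  finally show ?case .
qed (use assms in simp)

lemma received_words_subset:
  "received_words q n tau \<subseteq> (\<Union>m \<le> nat \<lfloor>real n + tau * n\<rfloor>. words q m)"
proof -
  have "m \<le> nat \<lfloor>real n + tau * n\<rfloor>" if "real m \<le> real n + tau * n" for m
    using that by (rule le_nat_floor)
  then show ?thesis unfolding received_words_def by blast
qed

lemma finite_received_words: "finite (received_words q n tau)"
  by (rule finite_subset[OF received_words_subset]) (simp add: finite_words)

lemma card_received_words_le:
  assumes q: "q \<ge> 2" and tau: "tau \<ge> 0"
  shows "real (card (received_words q n tau)) \<le> real q powr (real n + tau * n + 1)"
proof -
  define K where "K = nat \<lfloor>real n + tau * n\<rfloor>"
  have "card (received_words q n tau) \<le> card (\<Union>m\<le>K. words q m)"
    unfolding K_def by (intro card_mono received_words_subset) (auto simp: finite_words)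
  also have "\<dots> \<le> (\<Sum>m\<le>K. card (words q m))" by (rule card_UN_le) simp
  finally have "real (card (received_words q n tau)) \<le> (\<Sum>m\<le>K. real q ^ m)"
    by (simp add: card_words flip: of_nat_power of_nat_sum)
  also have "\<dots> \<le> real q ^ Suc K" using q by (intro sum_power_le_power_Suc) simp
  also have "\<dots> = real q powr real (Suc K)" using q by (intro powr_realpow[symmetric]) simp
  also have "\<dots> \<le> real q powr (real n + tau * n + 1)"
    using q tau unfolding K_def by (intro powr_mono) auto
  finally show ?thesis .
qed

lemma list_decodable_if_card_le:
  assumes "finite C" "real (card C) \<le> L"
  shows "list_decodable q n tau L C"
proof -
  have "card (insdel_ball q r (tau * n) \<inter> C) \<le> card C" for r
    using assms(1) by (intro card_mono) auto
  then show ?thesis unfolding list_decodable_iff using assms(2) by (meson of_nat_le_iff order_trans)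
qed

lemma not_list_decodable_codes_empty:
  assumes "real M \<le> L \<or> q ^ n < M"
  shows "{C. C \<subseteq> words q n \<and> card C = M \<and> \<not> list_decodable q n tau L C} = {}"
proof -
  have False if "C \<subseteq> words q n" "card C = M" "\<not> list_decodable q n tau L C" for C
  proof -
    have "finite C" "card C \<le> q ^ n"
      using that(1) finite_subset card_mono finite_words card_words by metis+
    then have "real (card C) \<le> L" using assms that(2) by auto
    then show False using list_decodable_if_card_le[OF \<open>finite C\<close>] that(3) by blast
  qed
  then show ?thesis by blast
qed

lemma card_not_list_decodable_le_union_bound:
  assumes q: "q \<ge> 2" and tau: "0 \<le> tau" "tau < (real q - 1) / q" and n: "n > 0"
    and L: "0 \<le> L" and M: "nat \<lfloor>L\<rfloor> + 1 \<le> M" "M \<le> q ^ n"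
  shows "real (card {C. C \<subseteq> words q n \<and> card C = M \<and> \<not> list_decodable q n tau L C})
           \<le> real q powr (real n + tau * n + 1)
              * (real q powr (real n * (1 - rate_fun q tau)) * real M / real q ^ n) ^ (nat \<lfloor>L\<rfloor> + 1)
              * real (q ^ n choose M)"
proof -
  define L' where "L' = nat \<lfloor>L\<rfloor> + 1"
  define I where "I = received_words q n tau"
  have L': "L' \<le> k \<longleftrightarrow> L < real k" for k :: nat
    unfolding L'_def using L by (simp add: Suc_le_eq nat_less_iff floor_less_iff)
  have "{C. C \<subseteq> words q n \<and> card C = M \<and> \<not> list_decodable q n tau L C}
      \<subseteq> {C. C \<subseteq> words q n \<and> card C = M \<and> (\<exists>r\<in>I. L' \<le> card (insdel_ball q r (tau * n) \<inter> C))}"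
    unfolding I_def list_decodable_iff L' by (auto simp: not_le)
  then have "real (card {C. C \<subseteq> words q n \<and> card C = M \<and> \<not> list_decodable q n tau L C})
      \<le> real (card {C. C \<subseteq> words q n \<and> card C = M \<and> (\<exists>r\<in>I. L' \<le> card (insdel_ball q r (tau * n) \<inter> C))})"
    using finite_words
    by (intro of_nat_mono card_mono) (auto intro: finite_subset[rotated, OF finite_Pow_iff[THEN iffD2]])
  also have "\<dots> \<le> real (card I)
      * (real q powr (real n * (1 - rate_fun q tau)) * real M / real (card (words q n))) ^ L'
      * real (card (words q n) choose M)"
  proof (rule card_subsets_with_large_intersection_le)
    show "finite I" unfolding I_def by (rule finite_received_words)
    fix r assume "r \<in> I"
    then show "real (card (insdel_ball q r (tau * n) \<inter> words q n)) \<le> real q powr (real n * (1 - rate_fun q tau))"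
      unfolding I_def received_words_def using card_insdel_ball_le[OF q tau] n by auto
  qed (use M finite_words card_words L'_def in auto)
  also have "\<dots> \<le> real q powr (real n + tau * n + 1)
      * (real q powr (real n * (1 - rate_fun q tau)) * real M / real q ^ n) ^ L' * real (q ^ n choose M)"
    unfolding I_def card_words using card_received_words_le[OF q tau(1), of n]
    by (intro mult_right_mono) (auto intro!: mult_right_mono zero_le_power)
  finally show ?thesis unfolding L'_def .
qed

lemma union_bound_le_powr:
  fixes q n M L' :: nat and rho tau eps :: real
  assumes q: "q \<ge> 2" and n: "n \<ge> 1" and L': "3 + tau \<le> eps * L'"
    and M: "real M \<le> real q powr ((rho - eps) * n)"
  shows "real q powr (real n + tau * n + 1) * (real q powr (real n * (1 - rho)) * real M / real q ^ n) ^ L'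
           \<le> real q powr (- real n)"
proof -
  have "real q powr (real n * (1 - rho)) * real M
      \<le> real q powr (real n * (1 - rho)) * real q powr ((rho - eps) * n)"
    using M by (intro mult_left_mono) auto
  also have "\<dots> = real q powr (- eps * n) * real q ^ n"
    using q by (simp add: powr_realpow[symmetric] powr_add[symmetric] algebra_simps)
  finally have "real q powr (real n * (1 - rho)) * real M / real q ^ n \<le> real q powr (- eps * n)"
    using q by (simp add: divide_le_eq)
  then have "real q powr (real n + tau * n + 1) * (real q powr (real n * (1 - rho)) * real M / real q ^ n) ^ L'
      \<le> real q powr (real n + tau * n + 1) * (real q powr (- eps * n)) ^ L'"
    by (intro mult_left_mono power_mono) auto
  also have "\<dots> = real q powr (real n + tau * n + 1 - eps * n * L')"
    using q by (simp add: powr_realpow[symmetric] powr_powr powr_add[symmetric])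
  also have "\<dots> \<le> real q powr (- real n)"
  proof (intro powr_mono)
    have "(3 + tau) * n \<le> (eps * L') * n" using L' by (intro mult_right_mono) auto
    then have "3 * real n + tau * n \<le> eps * n * L'" by (simp add: algebra_simps)
    then show "real n + tau * n + 1 - eps * n * L' \<le> - real n" using n by linarith
  qed (use q in auto)
  finally show ?thesis .
qed

lemma card_not_list_decodable_le:
  fixes q n M :: nat and tau eps c :: real
  assumes q: "q \<ge> 2" and tau: "tau \<ge> 0" and dom: "rate_domain q tau \<noteq> {}" and n: "n \<ge> 1"
    and eps: "0 < eps" "eps < 1" and c: "3 + tau \<le> c"
    and M: "real M \<le> real q powr ((rate_fun q tau - eps) * n)"
  shows "real (card {C. C \<subseteq> words q n \<and> card C = M \<and> \<not> list_decodable q n tau (c / eps) C})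
           \<le> real q powr (- real n) * real (card (words q n) choose M)"
proof -
  define L where "L = c / eps"
  define Bad where "Bad = {C. C \<subseteq> words q n \<and> card C = M \<and> \<not> list_decodable q n tau L C}"
  have "c \<le> L" unfolding L_def using eps c tau by (simp add: field_simps)
  then have "3 \<le> L" using c tau by linarith
  consider "real M \<le> L \<or> q ^ n < M" | "L < real M" "M \<le> q ^ n" by linarith
  then have "real (card Bad) \<le> real q powr (- real n) * real (q ^ n choose M)"
  proof cases
    case 1
    then show ?thesis unfolding Bad_def by (simp add: not_list_decodable_codes_empty)
  next
    case 2
    define L' where "L' = nat \<lfloor>L\<rfloor> + 1"
    have "L < L'" "L' \<le> M" unfolding L'_def using 2 \<open>3 \<le> L\<close> by linarith+
    have "rate_fun q tau - eps > 0"
    proof (rule ccontr)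
      assume "\<not> rate_fun q tau - eps > 0"
      then have "real q powr ((rate_fun q tau - eps) * n) \<le> real q powr 0"
        using q by (intro powr_mono) (auto simp: mult_nonpos_nonneg)
      then show False using M 2 \<open>3 \<le> L\<close> q by simp
    qed
    then have "tau < (real q - 1) / q" using rate_fun_nonpos[OF q _ dom] eps by force
    then have "real (card Bad) \<le> real q powr (real n + tau * n + 1)
        * (real q powr (real n * (1 - rate_fun q tau)) * real M / real q ^ n) ^ L' * real (q ^ n choose M)"
      unfolding Bad_def L'_def using q tau n \<open>3 \<le> L\<close> \<open>L' \<le> M\<close> 2
      by (intro card_not_list_decodable_le_union_bound) (auto simp: L'_def)
    also have "\<dots> \<le> real q powr (- real n) * real (q ^ n choose M)"
    proof (intro mult_right_mono union_bound_le_powr[OF q n _ M])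
      show "3 + tau \<le> eps * L'" using \<open>L < L'\<close> eps c unfolding L_def by (simp add: field_simps)
    qed simp
    finally show ?thesis .
  qed
  then show ?thesis unfolding Bad_def L_def card_words .
qed

lemma card_good_codes_add_card_bad:
  "card (good_codes q n M tau L) + card {C. C \<subseteq> words q n \<and> card C = M \<and> \<not> list_decodable q n tau L C}
     = card (words q n) choose M"
proof -
  define A where "A = {C. C \<subseteq> words q n \<and> card C = M}"
  have "finite A" unfolding A_def
    using finite_words by (rule finite_subset[rotated, OF finite_Pow_iff[THEN iffD2]]) auto
  have "card {C \<in> A. list_decodable q n tau L C} + card {C \<in> A. \<not> list_decodable q n tau L C}
      = card ({C \<in> A. list_decodable q n tau L C} \<union> {C \<in> A. \<not> list_decodable q n tau L C})"
    using \<open>finite A\<close> by (intro card_Un_disjoint[symmetric]) auto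
  also have "\<dots> = card A" by (rule arg_cong[where f = card]) auto
  also have "\<dots> = card (words q n) choose M" unfolding A_def using finite_words by (rule n_subsets)
  finally show ?thesis unfolding A_def good_codes_def by (simp add: conj_assoc)
qed

theorem mainTheorem1:
  fixes q :: nat and tau :: real
  assumes "q \<ge> 3" and "tau \<ge> 0"
    and "{(g, k). 0 \<le> g \<and> g < real q - 1 \<and> 0 \<le> k \<and> k < (real q - 1) / q \<and> g + k = tau} \<noteq> {}"
  shows "\<exists>c > 0. \<exists>eps0 > 0. \<forall>eps. 0 < eps \<and> eps < eps0 \<longrightarrow>
          (\<exists>N. \<forall>n \<ge> N.
             (let R = rate_fun q tau - eps;
                  M = nat \<lfloor>real q powr (R * n)\<rfloor>
              in real (card (good_codes q n M tau (c / eps)))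
                   \<ge> (1 - real q powr (- real n)) * real (card (words q n) choose M)))"
proof (rule exI[of _ "3 + tau"], intro conjI exI[of _ "1 :: real"] exI[of _ "1 :: nat"] allI impI)
  fix eps :: real and n :: nat
  assume eps: "0 < eps \<and> eps < 1" and n: "1 \<le> n"
  have q: "q \<ge> 2" and dom: "rate_domain q tau \<noteq> {}"
    using assms unfolding rate_domain_def by auto
  define M where "M = nat \<lfloor>real q powr ((rate_fun q tau - eps) * n)\<rfloor>"
  have "real (card {C. C \<subseteq> words q n \<and> card C = M \<and> \<not> list_decodable q n tau ((3 + tau) / eps) C})
      \<le> real q powr (- real n) * real (card (words q n) choose M)"
    using q assms(2) dom n eps unfolding M_def by (intro card_not_list_decodable_le) auto
  then show "let R = rate_fun q tau - eps; M = nat \<lfloor>real q powr (R * n)\<rfloor>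
        in real (card (good_codes q n M tau ((3 + tau) / eps)))
             \<ge> (1 - real q powr (- real n)) * real (card (words q n) choose M)"
    using card_good_codes_add_card_bad[of q n M tau "(3 + tau) / eps", THEN arg_cong[where f = real]]
    unfolding Let_def M_def[symmetric] by (simp add: algebra_simps)
qed (use assms in auto)

end
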